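(* Let $\rho$ be a critical radius function on $\mathbb{R}^n$ and $p(\cdot),q(\cdot)\in\mathcal{P}^{\log}(\mathbb{R}^n)$ with $q(\cdot)\le p(\cdot)$. If $w\in A^\rho_{q(\cdot),\infty}$, then $w\in A^\rho_{p(\cdot),\infty}$.
   Context: A critical radius function is $\rho:\mathbb{R}^n\to(0,\infty)$ with constants $c_\rho,N_\rho\ge1$ such that $c_\rho^{-1}\rho(x)\big(1+\frac{|x-y|}{\rho(x)}\big)^{-N_\rho}\le\rho(y)\le c_\rho\rho(x)\big(1+\frac{|x-y|}{\rho(x)}\big)^{N_\rho/(N_\rho+1)}$ for all $x,y$. $\mathcal{P}(\mathbb{R}^n)$ is the set of measurable $p(\cdot):\mathbb{R}^n\to[1,\infty]$, $p^\pm$ ess sup/inf, $p'(\cdot)$ the pointwise conjugate exponent, $\|\cdot\|_{p(\cdot)}$ the Luxemburg norm $\inf\{\lambda>0:\int(|f|/\lambda)^{p(x)}dx\le1\}$. $p\in\mathcal{P}^{\log}(\mathbb{R}^n)$ means $p^+<\infty$ and there are $C,p_\infty$ with $|p(x)-p(y)|\le-C/\log|x-y|$ for $|x-y|<1/2$ and $|p(x)-p_\infty|\le C/\log(e+|x|)$. A weight is a locally integrable $w$ with $0<w<\infty$ a.e.; $w\in A^\rho_{p(\cdot),\infty}$ if there are $\theta>0,C>0$ with $\|w\chi_B\|_\infty\|w^{-1}\chi_B\|_{p'(\cdot)}\le C\|\chi_B\|_{p'(\cdot)}(1+\frac r{\rho(x)})^\theta$ for all balls $B=B(x,r)$. *)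

theory Defs
  imports "HOL-Analysis.Analysis" "HOL-Probability.Essential_Supremum"
begin

definition critical_radius :: "('a::euclidean_space \<Rightarrow> real) \<Rightarrow> bool" where
  "critical_radius \<rho> \<longleftrightarrow> (\<forall>x. \<rho> x > 0) \<and>
     (\<exists>c N. c \<ge> 1 \<and> N \<ge> 1 \<and> (\<forall>x y.
        (1/c) * \<rho> x * (1 + dist x y / \<rho> x) powr (- N) \<le> \<rho> y \<and>
        \<rho> y \<le> c * \<rho> x * (1 + dist x y / \<rho> x) powr (N / (N + 1))))"

definition var_exp :: "('a::euclidean_space \<Rightarrow> ereal) \<Rightarrow> bool" where
  "var_exp p \<longleftrightarrow> p \<in> borel_measurable lebesgue \<and> (\<forall>x. 1 \<le> p x)"

definition exp_sup :: "('a::euclidean_space \<Rightarrow> ereal) \<Rightarrow> ereal" where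
  "exp_sup p = esssup lebesgue p"

definition conj_exp :: "('a \<Rightarrow> ereal) \<Rightarrow> 'a \<Rightarrow> ereal" where
  "conj_exp p x = (if p x = 1 then \<infinity> else if p x = \<infinity> then 1 else p x / (p x - 1))"

definition log_holder :: "('a::euclidean_space \<Rightarrow> ereal) \<Rightarrow> bool" where
  "log_holder p \<longleftrightarrow> var_exp p \<and> exp_sup p < \<infinity> \<and>
     (\<exists>C pinf :: real.
        (\<forall>x y. dist x y < 1/2 \<longrightarrow> \<bar>p x - p y\<bar> \<le> ereal (- C / ln (dist x y))) \<and>
        (\<forall>x. \<bar>p x - ereal pinf\<bar> \<le> ereal (C / ln (exp 1 + norm x))))"

definition exp_pow :: "ereal \<Rightarrow> real \<Rightarrow> ennreal" where
  "exp_pow p t = (if p = \<infinity> then (if t \<le> 1 then 0 else \<infinity>)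
                  else ennreal (t powr real_of_ereal p))"

text \<open>Luxemburg norm of the variable Lebesgue space (value \<infinity> if no \<lambda> works).\<close>
definition lux_norm :: "('a::euclidean_space \<Rightarrow> ereal) \<Rightarrow> ('a \<Rightarrow> real) \<Rightarrow> ereal" where
  "lux_norm p f = Inf {ereal l | l. l > 0 \<and>
      (\<integral>\<^sup>+ x. exp_pow (p x) (\<bar>f x\<bar> / l) \<partial>lebesgue) \<le> 1}"

definition Linf_norm :: "('a::euclidean_space \<Rightarrow> real) \<Rightarrow> ereal" where
  "Linf_norm f = esssup lebesgue (\<lambda>x. ereal \<bar>f x\<bar>)"

definition weight :: "('a::euclidean_space \<Rightarrow> real) \<Rightarrow> bool" where
  "weight w \<longleftrightarrow> (\<forall>K. compact K \<longrightarrow> set_integrable lebesgue K w) \<and>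
                 (AE x in lebesgue. 0 < w x)"

definition A_rho_infty :: "('a::euclidean_space \<Rightarrow> real) \<Rightarrow> ('a \<Rightarrow> ereal) \<Rightarrow> ('a \<Rightarrow> real) set" where
  "A_rho_infty \<rho> p = {w. weight w \<and> (\<exists>\<theta>>0. \<exists>C>0. \<forall>x r. r > 0 \<longrightarrow>
      Linf_norm (\<lambda>y. w y * indicator (ball x r) y)
        * lux_norm (conj_exp p) (\<lambda>y. indicator (ball x r) y / w y)
      \<le> ereal C * lux_norm (conj_exp p) (indicator (ball x r))
          * ereal ((1 + r / \<rho> x) powr \<theta>))}"

end

theory Submission
  imports Defs
begin

text \<open>
  Write \<open>g = 1/p'\<close> and \<open>a = 1/q'\<close>, so that \<open>0 \<le> a \<le> g \<le> 1\<close>. On a ball \<open>B\<close> of volume \<open>V\<close>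
  on which \<open>a\<close> and \<open>g\<close> stay within \<open>\<delta>\<close> of their values at the centre, comparing modulars
  shows that the \<open>q'\<close>- and \<open>p'\<close>-norms of the indicator of \<open>B\<close> are \<open>V^a\<close> and \<open>V^g\<close> up to
  factors \<open>exp (\<plusminus>\<delta> \<bar>ln V\<bar>)\<close>, and Hoelder's inequality with the exponent \<open>g - a\<close> bounds the
  \<open>p'\<close>-norm of a function supported in \<open>B\<close> by \<open>2 V^(g-a) exp (2 \<delta> \<bar>ln V\<bar>)\<close> times its
  \<open>q'\<close>-norm. Hence the \<open>A_q\<close> condition on \<open>B\<close> implies the \<open>A_p\<close> condition up to the factor
  \<open>exp (4 \<delta> \<bar>ln V\<bar>)\<close>. The log-Hoelder conditions keep \<open>\<delta> \<bar>ln r\<bar>\<close> bounded on small balls and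
  on balls far from the origin. The remaining balls are large and their doubles contain the
  origin, so the upper growth bound of the critical radius at the origin gives
  \<open>r \<le> K (1 + r / \<rho> x\<^sub>0)^(N+1)\<close>. Thus the factor is at most \<open>K (1 + r / \<rho> x\<^sub>0)^\<theta>\<close> and is
  absorbed into the power of \<open>1 + r / \<rho> x\<^sub>0\<close> in the \<open>A_p\<close> condition.
\<close>

text \<open>With \<open>g = 1/p'(x)\<close> this is the Young function \<open>t^p'(x)\<close> of \<open>exp_pow\<close>; \<open>g = 0\<close> encodes
  \<open>p'(x) = \<infinity>\<close>.\<close>
definition pow_recip :: "real \<Rightarrow> real \<Rightarrow> ennreal" where
  "pow_recip g t = (if g = 0 then (if t \<le> 1 then 0 else \<infinity>) else ennreal (t powr (1 / g)))"

lemma pow_recip_0 [simp]: "pow_recip g 0 = 0"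
  by (simp add: pow_recip_def)

lemma exp_pow_conj_exp:
  assumes "p x = ereal P" "1 \<le> P"
  shows "exp_pow (conj_exp p x) t = pow_recip (1 - 1 / P) t"
proof (cases "P = 1")
  case True
  then show ?thesis using assms by (simp add: conj_exp_def exp_pow_def pow_recip_def)
next
  case False
  then have "P > 1" using assms by simp
  moreover have "ereal P - 1 = ereal (P - 1)" by (simp add: one_ereal_def)
  ultimately have "conj_exp p x = ereal (1 / (1 - 1 / P))" "1 - 1 / P \<noteq> 0"
    using assms by (simp_all add: conj_exp_def field_simps)
  then show ?thesis by (simp add: exp_pow_def pow_recip_def)
qed

lemma pow_recip_mono: "0 \<le> s \<Longrightarrow> s \<le> t \<Longrightarrow> 0 \<le> g \<Longrightarrow> pow_recip g s \<le> pow_recip g t"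
  by (auto simp: pow_recip_def intro!: ennreal_leI powr_mono2)

lemma pow_recip_le_inverse:
  assumes "V > 0" "V powr g \<le> L" "0 \<le> g"
  shows "pow_recip g (1 / L) \<le> ennreal (1 / V)"
proof (cases "g = 0")
  case False
  then have "g > 0" using assms by simp
  have "0 < V powr g" using assms by simp
  then have "0 < L" using assms by linarith
  then have "1 / L \<le> 1 / V powr g"
    using assms \<open>0 < V powr g\<close> by (simp add: frac_le)
  then have "(1 / L) powr (1 / g) \<le> (1 / V powr g) powr (1 / g)"
    using \<open>g > 0\<close> \<open>0 < L\<close> by (simp add: powr_mono2)
  also have "\<dots> = 1 / V" using assms \<open>g > 0\<close> by (simp add: powr_divide powr_powr)
  finally show ?thesis using False by (simp add: pow_recip_def ennreal_leI)
qed (use assms in \<open>simp add: pow_recip_def\<close>)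

lemma pow_recip_ge_inverse:
  assumes "V > 0" "L > 0" "k > 1" "L * k \<le> V powr g" "0 \<le> g" "g \<le> 1"
  shows "ennreal (k / V) \<le> pow_recip g (1 / L)"
proof (cases "g = 0")
  case True
  have "L * 1 < L * k" using assms by (intro mult_strict_left_mono) auto
  also have "\<dots> \<le> 1" using assms True by simp
  finally have "1 < 1 / L" using assms by simp
  then show ?thesis using True by (simp add: pow_recip_def)
next
  case False
  then have g: "g > 0" using assms by simp
  have "k \<le> k powr (1 / g)"
    using powr_mono[of 1 "1 / g" k] assms g by simp
  then have "k / V \<le> k powr (1 / g) / V" using assms by (intro divide_right_mono) auto
  also have "\<dots> = (k / V powr g) powr (1 / g)" using assms g by (simp add: powr_divide powr_powr)
  also have "\<dots> \<le> (1 / L) powr (1 / g)"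
    using assms g by (intro powr_mono2) (simp_all add: divide_simps mult.commute)
  finally show ?thesis using False by (simp add: pow_recip_def ennreal_leI)
qed

lemma pow_recip_half:
  assumes "t \<ge> 0" "0 \<le> g" "g \<le> 1"
  shows "pow_recip g (t / 2) \<le> pow_recip g t / 2"
proof (cases "g = 0")
  case True
  then show ?thesis by (simp add: pow_recip_def ennreal_top_divide)
next
  case False
  then have g: "g > 0" using assms by simp
  have "(t / 2) powr (1 / g) = t powr (1 / g) / 2 powr (1 / g)"
    using assms by (simp add: powr_divide)
  also have "\<dots> \<le> t powr (1 / g) / 2"
    using powr_mono[of 1 "1 / g" 2] assms g by (intro divide_left_mono) auto
  finally have "ennreal ((t / 2) powr (1 / g)) \<le> ennreal (t powr (1 / g) / 2)"
    by (rule ennreal_leI)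
  then show ?thesis using False by (simp add: pow_recip_def divide_ennreal[symmetric])
qed

text \<open>Hoelder's inequality in modular form: Young's inequality with exponents \<open>1/a\<close> and
  \<open>1/b\<close> relative to \<open>1/(a + b)\<close>.\<close>
lemma pow_recip_mult_le:
  assumes "0 \<le> a" "0 \<le> b" "a + b \<le> 1" "u \<ge> 0" "v \<ge> 0"
  shows "pow_recip (a + b) (u * v) \<le> pow_recip a u + pow_recip b v"
proof -
  consider "a = 0 \<and> u > 1 \<or> b = 0 \<and> v > 1" | "a = 0" "u \<le> 1" | "b = 0" "v \<le> 1" | "a > 0" "b > 0"
    using assms by linarith
  then show ?thesis
  proof cases
    case 1
    then have "pow_recip a u = \<infinity> \<or> pow_recip b v = \<infinity>" by (auto simp: pow_recip_def)
    then show ?thesis by auto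
  next
    case 2
    then have "pow_recip (a + b) (u * v) \<le> pow_recip b v"
      using assms pow_recip_mono[of "u * v" v b] by (simp add: mult_left_le_one_le)
    then show ?thesis by (simp add: add_increasing)
  next
    case 3
    then have "pow_recip (a + b) (u * v) \<le> pow_recip a u"
      using assms pow_recip_mono[of "u * v" u a] by (simp add: mult_right_le_one_le)
    then show ?thesis by (simp add: add_increasing2)
  next
    case 4
    define g where "g = a + b"
    have g: "g > 0" using 4 by (simp add: g_def)
    have "(u * v) powr (1 / g) \<le> u powr (1 / a) + v powr (1 / b)"
    proof (cases "u = 0 \<or> v = 0")
      case False
      then have uv: "u > 0" "v > 0" using assms by auto
      then have "(u * v) powr (1 / g)
          = (u powr (1 / a)) powr (a / g) * (v powr (1 / b)) powr (b / g)"
        using 4 g uv by (simp add: powr_mult powr_powr)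
      also have "\<dots> \<le> (a / g) * u powr (1 / a) + (b / g) * v powr (1 / b)"
        using 4 g uv by (intro Youngs_inequality_0) (auto simp: g_def add_divide_distrib[symmetric])
      also have "\<dots> \<le> u powr (1 / a) + v powr (1 / b)"
        using 4 g by (intro add_mono mult_left_le_one_le) (auto simp: g_def)
      finally show ?thesis .
    next
      case True
      then have "(u * v) powr (1 / g) = 0" by auto
      moreover have "0 \<le> u powr (1 / a) + v powr (1 / b)" by simp
      ultimately show ?thesis by linarith
    qed
    then have "ennreal ((u * v) powr (1 / g)) \<le> ennreal (u powr (1 / a) + v powr (1 / b))"
      by (rule ennreal_leI)
    then show ?thesis using 4 g by (simp add: pow_recip_def g_def ennreal_plus)
  qed
qed


lemma measurable_pow_recip [measurable]:
  assumes [measurable]: "g \<in> borel_measurable M" "t \<in> borel_measurable M"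
  shows "(\<lambda>x. pow_recip (g x) (t x)) \<in> borel_measurable M"
  unfolding pow_recip_def by measurable

lemma ereal_le_mult_if_less_imp:
  fixes x y :: ereal
  assumes "c > 0" "0 \<le> x" and le: "\<And>l. x < ereal l \<Longrightarrow> y \<le> ereal (c * l)"
  shows "y \<le> ereal c * x"
proof (rule dense_ge)
  fix t assume t: "ereal c * x < t"
  show "y \<le> t"
  proof (cases t)
    case (real s)
    with t assms(1,2) have "x < ereal (s / c)"
      by (cases x) (auto simp: field_simps)
    then have "y \<le> ereal (c * (s / c))" by (rule le)
    with real assms(1) show ?thesis by simp
  qed (use t in auto)
qed

text \<open>The Luxemburg norm for the exponent with \<open>1/p' = G\<close>, cf. \<open>lux_norm_conj_exp\<close>.\<close>
definition lux_recip :: "('a::euclidean_space \<Rightarrow> real) \<Rightarrow> ('a \<Rightarrow> real) \<Rightarrow> ereal" where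
  "lux_recip G f = Inf {ereal l | l. l > 0 \<and> (\<integral>\<^sup>+ x. pow_recip (G x) (\<bar>f x\<bar> / l) \<partial>lebesgue) \<le> 1}"

lemma lux_norm_conj_exp:
  assumes "\<And>x. p x = ereal (P x)" "\<And>x. 1 \<le> P x"
  shows "lux_norm (conj_exp p) f = lux_recip (\<lambda>x. 1 - 1 / P x) f"
proof -
  have "exp_pow (conj_exp p x) t = pow_recip (1 - 1 / P x) t" for x t
    by (rule exp_pow_conj_exp) (rule assms)+
  then show ?thesis unfolding lux_norm_def lux_recip_def by simp
qed

lemma lux_recip_le:
  "l > 0 \<Longrightarrow> (\<integral>\<^sup>+ x. pow_recip (G x) (\<bar>f x\<bar> / l) \<partial>lebesgue) \<le> 1 \<Longrightarrow> lux_recip G f \<le> ereal l"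
  unfolding lux_recip_def by (intro Inf_lower) auto

lemma lux_recip_nonneg: "0 \<le> lux_recip G f"
  unfolding lux_recip_def by (intro Inf_greatest) auto

lemma lux_recip_lessD:
  assumes "lux_recip G f < ereal l" "\<And>x. 0 \<le> G x"
  shows "l > 0" "(\<integral>\<^sup>+ x. pow_recip (G x) (\<bar>f x\<bar> / l) \<partial>lebesgue) \<le> 1"
proof -
  obtain l' where l': "l' < l" "l' > 0" "(\<integral>\<^sup>+ x. pow_recip (G x) (\<bar>f x\<bar> / l') \<partial>lebesgue) \<le> 1"
    using assms(1) unfolding lux_recip_def by (auto simp: Inf_less_iff)
  then show "l > 0" by simp
  have "(\<integral>\<^sup>+ x. pow_recip (G x) (\<bar>f x\<bar> / l) \<partial>lebesgue)
      \<le> (\<integral>\<^sup>+ x. pow_recip (G x) (\<bar>f x\<bar> / l') \<partial>lebesgue)"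
    using l' assms(2) by (intro nn_integral_mono pow_recip_mono) (auto intro: divide_left_mono)
  with l' show "(\<integral>\<^sup>+ x. pow_recip (G x) (\<bar>f x\<bar> / l) \<partial>lebesgue) \<le> 1" by simp
qed

lemma lux_recip_ge:
  assumes "\<And>l. 0 < l \<Longrightarrow> l < L \<Longrightarrow> 1 < (\<integral>\<^sup>+ x. pow_recip (G x) (\<bar>f x\<bar> / l) \<partial>lebesgue)"
  shows "ereal L \<le> lux_recip G f"
  unfolding lux_recip_def
proof (intro Inf_greatest)
  fix y assume "y \<in> {ereal l | l. l > 0 \<and> (\<integral>\<^sup>+ x. pow_recip (G x) (\<bar>f x\<bar> / l) \<partial>lebesgue) \<le> 1}"
  then obtain l where "y = ereal l" "l > 0" "(\<integral>\<^sup>+ x. pow_recip (G x) (\<bar>f x\<bar> / l) \<partial>lebesgue) \<le> 1"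
    by auto
  then show "ereal L \<le> y" using assms[of l] by (cases "l < L") auto
qed

lemma powr_le_exp_abs_ln: "V > 0 \<Longrightarrow> \<bar>e\<bar> \<le> d \<Longrightarrow> V powr e \<le> exp (d * \<bar>ln V\<bar>)"
  for V e d :: real
proof -
  assume "V > 0" "\<bar>e\<bar> \<le> d"
  have "e * ln V \<le> \<bar>e\<bar> * \<bar>ln V\<bar>" using abs_ge_self[of "e * ln V"] by (simp add: abs_mult)
  also have "\<dots> \<le> d * \<bar>ln V\<bar>" using \<open>\<bar>e\<bar> \<le> d\<close> by (simp add: mult_right_mono)
  finally show ?thesis using \<open>V > 0\<close> by (simp add: powr_def)
qed

lemma exp_abs_ln_le_powr: "V > 0 \<Longrightarrow> \<bar>e\<bar> \<le> d \<Longrightarrow> exp (- d * \<bar>ln V\<bar>) \<le> V powr e"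
  for V e d :: real
  using powr_le_exp_abs_ln[of V "- e" d] by (simp add: powr_minus exp_minus field_simps)

lemma nn_integral_inverse_indicator:
  assumes "B \<in> sets lebesgue" "emeasure lebesgue B = ennreal V" "V > 0"
  shows "(\<integral>\<^sup>+ x. ennreal (1 / V) * indicator B x \<partial>lebesgue) = 1"
  using assms by (simp add: nn_integral_cmult_indicator ennreal_mult[symmetric])

lemma lux_recip_indicator_le:
  assumes B: "B \<in> sets lebesgue" "emeasure lebesgue B = ennreal V" "V > 0"
    and G: "\<And>x. 0 \<le> G x" and osc: "\<And>x. x \<in> B \<Longrightarrow> \<bar>G x - g0\<bar> \<le> \<delta>"
  shows "lux_recip G (indicator B) \<le> ereal (V powr g0 * exp (\<delta> * \<bar>ln V\<bar>))"
proof (rule lux_recip_le)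
  define l where "l = V powr g0 * exp (\<delta> * \<bar>ln V\<bar>)"
  show "l > 0" using B by (simp add: l_def)
  have "pow_recip (G x) (\<bar>indicator B x\<bar> / l) \<le> ennreal (1 / V) * indicator B x" for x
  proof (cases "x \<in> B")
    case True
    have "V powr G x = V powr g0 * V powr (G x - g0)" using B by (simp add: powr_add[symmetric])
    also have "\<dots> \<le> l"
      unfolding l_def using B osc[OF True] by (intro mult_left_mono powr_le_exp_abs_ln) auto
    finally show ?thesis using True B G pow_recip_le_inverse[of V "G x" l] by simp
  qed simp
  then have "(\<integral>\<^sup>+ x. pow_recip (G x) (\<bar>indicator B x\<bar> / l) \<partial>lebesgue)
      \<le> (\<integral>\<^sup>+ x. ennreal (1 / V) * indicator B x \<partial>lebesgue)"
    by (intro nn_integral_mono)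
  also have "\<dots> = 1" using nn_integral_inverse_indicator[OF B] .
  finally show "(\<integral>\<^sup>+ x. pow_recip (G x) (\<bar>indicator B x\<bar> / l) \<partial>lebesgue) \<le> 1" .
qed

lemma lux_recip_indicator_ge:
  assumes B: "B \<in> sets lebesgue" "emeasure lebesgue B = ennreal V" "V > 0"
    and G: "\<And>x. 0 \<le> G x" "\<And>x. G x \<le> 1" and osc: "\<And>x. x \<in> B \<Longrightarrow> \<bar>G x - g0\<bar> \<le> \<delta>"
  shows "ereal (V powr g0 * exp (- \<delta> * \<bar>ln V\<bar>)) \<le> lux_recip G (indicator B)"
proof (rule lux_recip_ge)
  define L where "L = V powr g0 * exp (- \<delta> * \<bar>ln V\<bar>)"
  fix l :: real assume l: "0 < l" "l < V powr g0 * exp (- \<delta> * \<bar>ln V\<bar>)"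
  define k where "k = L / l"
  have k: "k > 1" "l * k = L" using l by (simp_all add: k_def L_def)
  have "ennreal (k / V) * indicator B x \<le> pow_recip (G x) (\<bar>indicator B x\<bar> / l)" for x
  proof (cases "x \<in> B")
    case True
    have "L \<le> V powr g0 * V powr (G x - g0)"
      unfolding L_def using B osc[OF True] by (intro mult_left_mono exp_abs_ln_le_powr) auto
    also have "\<dots> = V powr G x" using B by (simp add: powr_add[symmetric])
    finally show ?thesis using True B G l k pow_recip_ge_inverse[of V l k "G x"] by simp
  qed simp
  then have "(\<integral>\<^sup>+ x. ennreal (k / V) * indicator B x \<partial>lebesgue)
      \<le> (\<integral>\<^sup>+ x. pow_recip (G x) (\<bar>indicator B x\<bar> / l) \<partial>lebesgue)"
    by (intro nn_integral_mono)
  moreover have "(\<integral>\<^sup>+ x. ennreal (k / V) * indicator B x \<partial>lebesgue) = ennreal (k / V) * ennreal V"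
    using B by (simp add: nn_integral_cmult_indicator)
  moreover have "ennreal (k / V) * ennreal V = ennreal k"
    using B k by (simp add: ennreal_mult[symmetric])
  moreover have "1 < ennreal k" using k by simp
  ultimately show "1 < (\<integral>\<^sup>+ x. pow_recip (G x) (\<bar>indicator B x\<bar> / l) \<partial>lebesgue)"
    by (metis order_less_le_trans)
qed

text \<open>The constant is twice the norm bound of the indicator of \<open>B\<close> for the exponent \<open>Gp - Ga\<close>.\<close>
lemma lux_recip_le_mult_lux_recip:
  assumes B: "B \<in> sets lebesgue" "emeasure lebesgue B = ennreal V" "V > 0"
    and G: "\<And>x. 0 \<le> Ga x" "\<And>x. Ga x \<le> Gp x" "\<And>x. Gp x \<le> 1"
    and Ga_meas: "Ga \<in> borel_measurable lebesgue"
    and osc: "\<And>x. x \<in> B \<Longrightarrow> \<bar>Ga x - a0\<bar> \<le> \<delta>" "\<And>x. x \<in> B \<Longrightarrow> \<bar>Gp x - g0\<bar> \<le> \<delta>"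
    and f: "f \<in> borel_measurable lebesgue" "\<And>x. x \<notin> B \<Longrightarrow> f x = 0"
  shows "lux_recip Gp f \<le> ereal (2 * (V powr (g0 - a0) * exp (2 * \<delta> * \<bar>ln V\<bar>))) * lux_recip Ga f"
proof (rule ereal_le_mult_if_less_imp)
  define \<sigma> where "\<sigma> = V powr (g0 - a0) * exp (2 * \<delta> * \<bar>ln V\<bar>)"
  have \<sigma>: "\<sigma> > 0" using B by (simp add: \<sigma>_def)
  then show "0 < 2 * \<sigma>" by simp
  show "0 \<le> lux_recip Ga f" by (rule lux_recip_nonneg)
  fix l assume "lux_recip Ga f < ereal l"
  then have l: "l > 0" and modular: "(\<integral>\<^sup>+ x. pow_recip (Ga x) (\<bar>f x\<bar> / l) \<partial>lebesgue) \<le> 1"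
    using lux_recip_lessD G(1) by blast+
  have "pow_recip (Gp x) (\<bar>f x\<bar> / (2 * \<sigma> * l))
      \<le> (pow_recip (Ga x) (\<bar>f x\<bar> / l) + ennreal (1 / V) * indicator B x) / 2" for x
  proof (cases "x \<in> B")
    case True
    have "\<bar>(Gp x - Ga x) - (g0 - a0)\<bar> \<le> 2 * \<delta>" using osc[OF True] by linarith
    then have "V powr (g0 - a0) * V powr ((Gp x - Ga x) - (g0 - a0)) \<le> \<sigma>"
      unfolding \<sigma>_def using B by (intro mult_left_mono powr_le_exp_abs_ln) auto
    then have "V powr (Gp x - Ga x) \<le> \<sigma>" using B by (simp add: powr_add[symmetric])
    then have Hoelder: "pow_recip (Gp x - Ga x) (1 / \<sigma>) \<le> ennreal (1 / V)"
      using B G(2) by (intro pow_recip_le_inverse) auto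
    have Young: "pow_recip (Gp x) (\<bar>f x\<bar> / (\<sigma> * l))
        \<le> pow_recip (Ga x) (\<bar>f x\<bar> / l) + pow_recip (Gp x - Ga x) (1 / \<sigma>)"
      using pow_recip_mult_le[of "Ga x" "Gp x - Ga x" "\<bar>f x\<bar> / l" "1 / \<sigma>"] G[of x] \<sigma> l
      by (simp add: mult.commute)
    have "pow_recip (Gp x) (\<bar>f x\<bar> / (2 * \<sigma> * l)) \<le> pow_recip (Gp x) (\<bar>f x\<bar> / (\<sigma> * l)) / 2"
      using pow_recip_half[of "\<bar>f x\<bar> / (\<sigma> * l)" "Gp x"] G[of x] \<sigma> l order_trans[OF G(1,2)]
      by (simp add: ac_simps)
    also have "\<dots> \<le> (pow_recip (Ga x) (\<bar>f x\<bar> / l) + ennreal (1 / V)) / 2"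
      using order_trans[OF Young add_left_mono[OF Hoelder]] by (rule divide_right_mono_ennreal)
    finally show ?thesis using True by simp
  qed (simp add: f(2))
  then have "(\<integral>\<^sup>+ x. pow_recip (Gp x) (\<bar>f x\<bar> / (2 * \<sigma> * l)) \<partial>lebesgue)
      \<le> (\<integral>\<^sup>+ x. (pow_recip (Ga x) (\<bar>f x\<bar> / l) + ennreal (1 / V) * indicator B x) / 2 \<partial>lebesgue)"
    by (intro nn_integral_mono)
  also have "\<dots> = ((\<integral>\<^sup>+ x. pow_recip (Ga x) (\<bar>f x\<bar> / l) \<partial>lebesgue) + 1) / 2"
    using B Ga_meas f(1)
    by (simp add: nn_integral_divide nn_integral_add nn_integral_inverse_indicator)
  also have "\<dots> \<le> (1 + 1) / 2" using modular by (intro divide_right_mono_ennreal add_right_mono)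
  also have "\<dots> = 1" by simp
  finally show "lux_recip Gp f \<le> ereal (2 * \<sigma> * l)" using \<sigma> l by (intro lux_recip_le) auto
qed

lemma lux_recip_condition_mono_exponent:
  assumes B: "B \<in> sets lebesgue" "emeasure lebesgue B = ennreal V" "V > 0"
    and G: "\<And>x. 0 \<le> Ga x" "\<And>x. Ga x \<le> Gp x" "\<And>x. Gp x \<le> 1"
    and Ga_meas: "Ga \<in> borel_measurable lebesgue"
    and osc: "\<And>x. x \<in> B \<Longrightarrow> \<bar>Ga x - a0\<bar> \<le> \<delta>" "\<And>x. x \<in> B \<Longrightarrow> \<bar>Gp x - g0\<bar> \<le> \<delta>"
    and f: "f \<in> borel_measurable lebesgue" "\<And>x. x \<notin> B \<Longrightarrow> f x = 0"
    and nonneg: "0 \<le> A" "0 \<le> C" "0 \<le> T"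
    and cond: "A * lux_recip Ga f \<le> ereal C * lux_recip Ga (indicator B) * ereal T"
  shows "A * lux_recip Gp f
    \<le> ereal (2 * C) * lux_recip Gp (indicator B) * ereal (T * exp (4 * \<delta> * \<bar>ln V\<bar>))"
proof -
  define s where "s = 2 * (V powr (g0 - a0) * exp (2 * \<delta> * \<bar>ln V\<bar>))"
  have s: "0 \<le> s" by (simp add: s_def)
  have "A * lux_recip Gp f \<le> A * (ereal s * lux_recip Ga f)"
    unfolding s_def using lux_recip_le_mult_lux_recip[OF B G Ga_meas osc f] nonneg(1)
    by (rule ereal_mult_left_mono)
  also have "\<dots> = ereal s * (A * lux_recip Ga f)" by (simp add: ac_simps)
  also have "\<dots> \<le> ereal s * (ereal C * lux_recip Ga (indicator B) * ereal T)"
    using cond s by (intro ereal_mult_left_mono) auto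
  also have "\<dots> \<le> ereal s * (ereal C * ereal (V powr a0 * exp (\<delta> * \<bar>ln V\<bar>)) * ereal T)"
    using lux_recip_indicator_le[OF B G(1) osc(1)] s nonneg
    by (intro ereal_mult_left_mono ereal_mult_right_mono) auto
  also have "\<dots> = ereal (2 * C * (T * exp (4 * \<delta> * \<bar>ln V\<bar>)))
      * ereal (V powr g0 * exp (- \<delta> * \<bar>ln V\<bar>))"
  proof -
    have "V powr (g0 - a0) * V powr a0 = V powr g0" using B by (simp add: powr_add[symmetric])
    moreover have "exp (2 * \<delta> * \<bar>ln V\<bar>) * exp (\<delta> * \<bar>ln V\<bar>)
        = exp (4 * \<delta> * \<bar>ln V\<bar>) * exp (- \<delta> * \<bar>ln V\<bar>)"
      by (simp add: exp_add[symmetric])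
    ultimately show ?thesis unfolding s_def by (simp add: ac_simps)
  qed
  also have "\<dots> \<le> ereal (2 * C * (T * exp (4 * \<delta> * \<bar>ln V\<bar>))) * lux_recip Gp (indicator B)"
    using lux_recip_indicator_ge[OF B order_trans[OF G(1,2)] G(3) osc(2)] nonneg
    by (intro ereal_mult_left_mono) auto
  finally show ?thesis by (simp add: ac_simps)
qed

lemma ln_exp_1_plus_pos: "0 \<le> t \<Longrightarrow> 0 < ln (exp 1 + t)"
  for t :: real
  using one_less_exp_iff[of 1] by (intro ln_gt_zero) linarith

definition log_holder_bound :: "real \<Rightarrow> real \<Rightarrow> ('a::real_normed_vector \<Rightarrow> real) \<Rightarrow> bool" where
  "log_holder_bound C pinf P \<longleftrightarrow>
     (\<forall>x y. dist x y < 1/2 \<longrightarrow> \<bar>P x - P y\<bar> \<le> - C / ln (dist x y)) \<and>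
     (\<forall>x. \<bar>P x - pinf\<bar> \<le> C / ln (exp 1 + norm x))"

lemma log_holderE:
  assumes "log_holder p"
  obtains P C pinf where "\<And>x. p x = ereal (P x)" "\<And>x. 1 \<le> P x" "P \<in> borel_measurable lebesgue"
    "log_holder_bound C pinf P"
proof -
  from assms obtain C pinf :: real where
    meas: "p \<in> borel_measurable lebesgue" and ge1: "\<And>x. 1 \<le> p x" and
    loc: "\<And>x y. dist x y < 1/2 \<Longrightarrow> \<bar>p x - p y\<bar> \<le> ereal (- C / ln (dist x y))" and
    decay: "\<And>x. \<bar>p x - ereal pinf\<bar> \<le> ereal (C / ln (exp 1 + norm x))"
    unfolding log_holder_def var_exp_def by blast
  define P where "P x = real_of_ereal (p x)" for x
  have finite: "p x = ereal (P x)" for x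
    using decay[of x] ge1[of x] unfolding P_def by (cases "p x") auto
  have "\<bar>P x - P y\<bar> \<le> - C / ln (dist x y)" if "dist x y < 1/2" for x y
    using loc[OF that] finite[of x] finite[of y] by simp
  moreover have "\<bar>P x - pinf\<bar> \<le> C / ln (exp 1 + norm x)" for x
    using decay[of x] finite[of x] by simp
  ultimately have "log_holder_bound C pinf P" by (simp add: log_holder_bound_def)
  moreover have "1 \<le> P x" for x using ge1[of x] finite[of x] by simp
  moreover have "P \<in> borel_measurable lebesgue" unfolding P_def using meas by measurable
  ultimately show ?thesis using that finite by blast
qed

lemma log_holder_bound_nonneg:
  fixes P :: "'a::real_normed_vector \<Rightarrow> real"
  assumes "log_holder_bound C pinf P"
  shows "0 \<le> C"
proof -
  have "\<bar>P 0 - pinf\<bar> \<le> C / ln (exp 1 + norm (0::'a))"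
    using assms unfolding log_holder_bound_def by blast
  then show ?thesis using abs_ge_zero[of "P 0 - pinf"] by simp
qed

lemma log_holder_bound_mono:
  assumes "log_holder_bound C pinf P" "C \<le> C'"
  shows "log_holder_bound C' pinf P"
  unfolding log_holder_bound_def
proof safe
  fix x y :: 'a assume near: "dist x y < 1/2"
  then have "ln (dist x y) \<le> 0" by (cases "x = y") auto
  then have "- C / ln (dist x y) \<le> - C' / ln (dist x y)"
    using assms(2) by (intro divide_right_mono_neg) auto
  moreover have "\<bar>P x - P y\<bar> \<le> - C / ln (dist x y)"
    using assms(1) near unfolding log_holder_bound_def by blast
  ultimately show "\<bar>P x - P y\<bar> \<le> - C' / ln (dist x y)" by linarith
next
  fix x :: 'a
  have "0 < ln (exp 1 + norm x)" by (rule ln_exp_1_plus_pos) simp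
  then have "C / ln (exp 1 + norm x) \<le> C' / ln (exp 1 + norm x)"
    using assms(2) by (intro divide_right_mono) auto
  moreover have "\<bar>P x - pinf\<bar> \<le> C / ln (exp 1 + norm x)"
    using assms(1) unfolding log_holder_bound_def by blast
  ultimately show "\<bar>P x - pinf\<bar> \<le> C' / ln (exp 1 + norm x)" by linarith
qed

lemma log_holder_common_bound:
  assumes "log_holder p" "log_holder q"
  obtains P Q C pinf qinf where
    "\<And>x. p x = ereal (P x)" "\<And>x. 1 \<le> P x" "log_holder_bound C pinf P"
    "\<And>x. q x = ereal (Q x)" "\<And>x. 1 \<le> Q x" "Q \<in> borel_measurable lebesgue"
    "log_holder_bound C qinf Q"
proof -
  obtain P Cp pinf where P: "\<And>x. p x = ereal (P x)" "\<And>x. 1 \<le> P x" "log_holder_bound Cp pinf P"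
    using log_holderE[OF assms(1)] by (metis (no_types))
  obtain Q Cq qinf where Q: "\<And>x. q x = ereal (Q x)" "\<And>x. 1 \<le> Q x" "Q \<in> borel_measurable lebesgue"
    "log_holder_bound Cq qinf Q"
    using log_holderE[OF assms(2)] by (metis (no_types))
  have "log_holder_bound (max Cp Cq) pinf P" "log_holder_bound (max Cp Cq) qinf Q"
    using log_holder_bound_mono[OF P(3)] log_holder_bound_mono[OF Q(4)] by simp_all
  then show ?thesis using that[OF P(1,2) _ Q(1-3)] by blast
qed

lemma log_holder_bound_osc_small:
  assumes "log_holder_bound C pinf P" "y \<in> ball x0 r" "r < 1/4"
  shows "\<bar>P y - P x0\<bar> \<le> - C / ln r"
proof -
  define d where "d = dist x0 y"
  have d: "0 \<le> d" "d < r" using assms(2) by (auto simp: d_def)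
  have C: "0 \<le> C" using assms(1) by (rule log_holder_bound_nonneg)
  have "\<bar>P x0 - P y\<bar> \<le> - C / ln d"
    using assms d unfolding log_holder_bound_def d_def by auto
  also have "\<dots> \<le> - C / ln r"
  proof (cases "d = 0")
    case False
    then have "ln d < ln r" "ln r < 0" using d assms(3) by auto
    then have "C / (- ln d) \<le> C / (- ln r)"
      using C by (intro divide_left_mono) (auto simp: mult_neg_neg)
    then show ?thesis by simp
  qed (use C d assms(3) in \<open>simp add: divide_nonneg_neg\<close>)
  finally show ?thesis by (simp add: abs_minus_commute)
qed

lemma log_holder_bound_osc_far:
  assumes "log_holder_bound C pinf P" "y \<in> ball x0 r" "r \<le> norm x0 / 2"
  shows "\<bar>P y - P x0\<bar> \<le> 2 * C / ln (exp 1 + r)"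
proof -
  have C: "0 \<le> C" using assms(1) by (rule log_holder_bound_nonneg)
  have r: "dist x0 y < r" using assms(2) by simp
  then have "0 < r" using zero_le_dist[of x0 y] by linarith
  have decay_le: "\<bar>P z - pinf\<bar> \<le> C / ln (exp 1 + r)" if "r \<le> norm z" for z
  proof -
    have "0 < ln (exp 1 + r)" using \<open>0 < r\<close> by (intro ln_exp_1_plus_pos) simp
    moreover have "ln (exp 1 + r) \<le> ln (exp 1 + norm z)"
      using that \<open>0 < r\<close> by (intro ln_mono) (auto intro: add_pos_pos)
    ultimately have "C / ln (exp 1 + norm z) \<le> C / ln (exp 1 + r)"
      using C by (intro divide_left_mono) auto
    moreover have "\<bar>P z - pinf\<bar> \<le> C / ln (exp 1 + norm z)"
      using assms(1) unfolding log_holder_bound_def by blast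
    ultimately show ?thesis by linarith
  qed
  have "r \<le> norm y" using r assms(3) norm_triangle_ineq2[of x0 y] by (simp add: dist_norm)
  moreover have "r \<le> norm x0" using \<open>0 < r\<close> assms(3) by simp
  ultimately show ?thesis using decay_le[of y] decay_le[of x0] by linarith
qed

text \<open>A bound for the oscillation of a log-Hoelder exponent on \<open>ball x0 r\<close>: local continuity
  for small balls, decay at infinity for balls far from the origin, and the trivial bound
  otherwise.\<close>
definition log_osc :: "real \<Rightarrow> 'a::real_normed_vector \<Rightarrow> real \<Rightarrow> real" where
  "log_osc C x0 r =
    (if r < 1/4 then min 1 (- C / ln r)
     else if r \<le> norm x0 / 2 then min 1 (2 * C / ln (exp 1 + r))
     else 1)"

lemma log_osc_le_1: "log_osc C x0 r \<le> 1"
  by (simp add: log_osc_def)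

lemma log_osc_nonneg:
  assumes "0 \<le> C" "0 < r"
  shows "0 \<le> log_osc C x0 r"
proof -
  have "0 < ln (exp 1 + r)" using assms(2) by (intro ln_exp_1_plus_pos) simp
  moreover have "r < 1/4 \<Longrightarrow> ln r < 0" using assms(2) by simp
  ultimately show ?thesis using assms(1) by (simp add: log_osc_def divide_nonneg_neg)
qed

lemma recip_osc_le_log_osc:
  assumes "log_holder_bound C pinf P" "\<And>x. 1 \<le> P x" "y \<in> ball x0 r"
  shows "\<bar>1 / P y - 1 / P x0\<bar> \<le> log_osc C x0 r"
proof -
  have P: "1 \<le> P y" "1 \<le> P x0" using assms(2) by auto
  have "\<bar>1 / P y - 1 / P x0\<bar> = \<bar>P y - P x0\<bar> / (P y * P x0)"
    using P by (simp add: field_simps abs_divide abs_minus_commute)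
  also have "\<dots> \<le> \<bar>P y - P x0\<bar> / 1"
    using P mult_mono[of 1 "P y" 1 "P x0"] by (intro divide_left_mono) auto
  finally have osc_P: "\<bar>1 / P y - 1 / P x0\<bar> \<le> \<bar>P y - P x0\<bar>" by simp
  have "0 < 1 / P y" "1 / P y \<le> 1" "0 < 1 / P x0" "1 / P x0 \<le> 1" using P by auto
  then have "\<bar>1 / P y - 1 / P x0\<bar> \<le> 1"
    by (simp only: abs_le_iff) (intro conjI; linarith)
  then show ?thesis
    using osc_P log_holder_bound_osc_small[OF assms(1,3)] log_holder_bound_osc_far[OF assms(1,3)]
    by (auto simp: log_osc_def)
qed

lemma critical_radiusE:
  assumes "critical_radius \<rho>"
  obtains c N where "1 \<le> c" "1 \<le> N" "\<And>x. 0 < \<rho> x"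
    "\<And>x y. \<rho> y \<le> c * \<rho> x * (1 + dist x y / \<rho> x) powr (N / (N + 1))"
  using assms unfolding critical_radius_def by blast

lemma critical_radius_large_ball:
  fixes \<rho> :: "'a::real_normed_vector \<Rightarrow> real"
  assumes c: "1 \<le> c" and N: "0 \<le> N" and pos: "\<And>x. 0 < \<rho> x"
    and growth: "\<And>y. \<rho> y \<le> c * \<rho> 0 * (1 + dist 0 y / \<rho> 0) powr (N / (N + 1))"
    and x0: "norm x0 < 2 * r"
  shows "max 1 r \<le> max 1 (\<rho> 0 / 2) * (2 * c * (1 + r / \<rho> x0)) powr (N + 1)"
proof -
  define s where "s = N / (N + 1)"
  define u where "u = 1 + 2 * r / \<rho> 0"
  have r: "0 < r" using x0 norm_ge_zero[of x0] by linarith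
  have s: "0 \<le> s" "1 - s = 1 / (N + 1)" using N by (auto simp: s_def field_simps)
  have u: "1 \<le> u" "r = \<rho> 0 * (u - 1) / 2" using r pos[of 0] by (auto simp: u_def field_simps)
  have us: "1 \<le> u powr s" using u s by (simp add: ge_one_powr_ge_zero)
  have "\<rho> x0 \<le> c * \<rho> 0 * (1 + norm x0 / \<rho> 0) powr s"
    using growth[of x0] by (simp add: s_def)
  also have "\<dots> \<le> c * \<rho> 0 * u powr s"
    using x0 pos[of 0] s c unfolding u_def
    by (intro mult_left_mono powr_mono2 add_left_mono divide_right_mono) auto
  finally have "r / (c * \<rho> 0 * u powr s) \<le> r / \<rho> x0"
    using r pos[of x0] by (intro divide_left_mono) auto
  moreover have "r / (c * \<rho> 0 * u powr s) = (u / u powr s - 1 / u powr s) / (2 * c)"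
  proof -
    have "u powr s \<noteq> 0" "c \<noteq> 0" "\<rho> 0 \<noteq> 0" using us c pos[of 0] by auto
    then show ?thesis by (subst u(2)) (simp add: field_simps)
  qed
  moreover have "u / u powr s = u powr (1 - s)" using u by (simp add: powr_diff)
  moreover have "1 / u powr s \<le> 1" using us by (simp add: divide_le_eq_1)
  ultimately have "(u powr (1 - s) - 1) / (2 * c) \<le> r / \<rho> x0"
    using c by (smt (verit, best) divide_right_mono)
  then have "u powr (1 - s) \<le> 2 * c * (1 + r / \<rho> x0)"
    using c by (simp add: field_simps)
  then have "(u powr (1 - s)) powr (N + 1) \<le> (2 * c * (1 + r / \<rho> x0)) powr (N + 1)"
    using N by (intro powr_mono2) auto
  moreover have "(u powr (1 - s)) powr (N + 1) = u" using u(1) N by (simp add: s powr_powr)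
  ultimately have "u \<le> (2 * c * (1 + r / \<rho> x0)) powr (N + 1)" by simp
  moreover have "max 1 r \<le> max 1 (\<rho> 0 / 2) * u"
  proof -
    have "r \<le> \<rho> 0 / 2 * u" using u(2) pos[of 0] by (simp add: field_simps)
    also have "\<dots> \<le> max 1 (\<rho> 0 / 2) * u" using u by (intro mult_right_mono) auto
    finally show ?thesis using u mult_mono[of 1 "max 1 (\<rho> 0 / 2)" 1 u] by simp
  qed
  ultimately show ?thesis by (smt (verit) mult_left_mono)
qed

lemma abs_ln_le_ln_max_1: "1/4 \<le> r \<Longrightarrow> \<bar>ln r\<bar> \<le> ln 4 + ln (max 1 r)"
  for r :: real
proof -
  assume r: "1/4 \<le> r"
  then have "- ln 4 \<le> ln r" using ln_mono[of "1/4" r] by (simp add: ln_div)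
  then show ?thesis using r by (cases "1 \<le> r") (auto simp: max_def)
qed

lemma log_osc_mult_abs_ln_le:
  fixes \<rho> :: "'a::real_normed_vector \<Rightarrow> real" and c N C r :: real
  assumes c: "1 \<le> c" and N: "0 \<le> N" and pos: "\<And>x. 0 < \<rho> x"
    and growth: "\<And>y. \<rho> y \<le> c * \<rho> 0 * (1 + dist 0 y / \<rho> 0) powr (N / (N + 1))"
    and C: "0 \<le> C" and r: "0 < r"
  shows "log_osc C x0 r * \<bar>ln r\<bar>
    \<le> ln 4 + 2 * C + ln (max 1 (\<rho> 0 / 2)) + (N + 1) * ln (2 * c * (1 + r / \<rho> x0))"
proof -
  define \<delta> where "\<delta> = log_osc C x0 r"
  have \<delta>: "0 \<le> \<delta>" "\<delta> \<le> 1" using log_osc_nonneg[OF C r] log_osc_le_1 by (auto simp: \<delta>_def)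
  have "0 < 1 + r / \<rho> x0" using r pos[of x0] by (simp add: add_pos_pos)
  have "1 * 1 \<le> 2 * c * (1 + r / \<rho> x0)"
    using c r pos[of x0] by (intro mult_mono) auto
  then have "0 \<le> (N + 1) * ln (2 * c * (1 + r / \<rho> x0))" using N by simp
  moreover have "0 \<le> ln (max 1 (\<rho> 0 / 2))" "0 \<le> ln (4::real)" by simp_all
  ultimately have rhs: "C \<le> ln 4 + 2 * C"
    "ln 4 + 2 * C \<le> ln 4 + 2 * C + ln (max 1 (\<rho> 0 / 2)) + (N + 1) * ln (2 * c * (1 + r / \<rho> x0))"
    using C by linarith+
  consider (small) "r < 1/4" | (far) "1/4 \<le> r" "r \<le> norm x0 / 2"
    | (large) "1/4 \<le> r" "norm x0 < 2 * r"
    by linarith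
  then show ?thesis
  proof cases
    case small
    have "ln r < 0" using r small by simp
    moreover have "\<delta> \<le> C / (- ln r)" using small by (simp add: \<delta>_def log_osc_def)
    ultimately have "\<delta> * - ln r \<le> C" using pos_le_divide_eq[of "- ln r" \<delta> C] by simp
    then show ?thesis using \<open>ln r < 0\<close> rhs unfolding \<delta>_def by simp
  next
    case far
    have "0 < ln (exp 1 + r)" using r by (intro ln_exp_1_plus_pos) simp
    moreover have "\<delta> \<le> 2 * C / ln (exp 1 + r)" using far by (simp add: \<delta>_def log_osc_def)
    ultimately have "\<delta> * ln (exp 1 + r) \<le> 2 * C"
      using pos_le_divide_eq[of "ln (exp 1 + r)" \<delta> "2 * C"] by simp
    have "max 1 r \<le> exp 1 + r"
      using r one_le_exp_iff[of 1] by (intro max.boundedI) linarith+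
    then have "ln (max 1 r) \<le> ln (exp 1 + r)" by (rule ln_mono) simp
    then have "\<bar>ln r\<bar> \<le> ln 4 + ln (exp 1 + r)" using abs_ln_le_ln_max_1[OF far(1)] by linarith
    then have "\<delta> * \<bar>ln r\<bar> \<le> \<delta> * ln 4 + \<delta> * ln (exp 1 + r)"
      using \<delta> by (metis distrib_left mult_left_mono)
    moreover have "\<delta> * ln 4 \<le> ln 4" using \<delta> by (simp add: mult_left_le_one_le)
    ultimately show ?thesis using \<open>\<delta> * ln (exp 1 + r) \<le> 2 * C\<close> rhs unfolding \<delta>_def by linarith
  next
    case large
    have "\<delta> = 1" using large by (simp add: \<delta>_def log_osc_def)
    then have "\<delta> * \<bar>ln r\<bar> \<le> ln 4 + ln (max 1 r)" using abs_ln_le_ln_max_1[OF large(1)] by simp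
    also have "ln (max 1 r) \<le> ln (max 1 (\<rho> 0 / 2) * (2 * c * (1 + r / \<rho> x0)) powr (N + 1))"
      using critical_radius_large_ball[OF c N pos growth large(2)] by (rule ln_mono) simp
    also have "\<dots> = ln (max 1 (\<rho> 0 / 2)) + (N + 1) * ln (2 * c * (1 + r / \<rho> x0))"
      using c \<open>0 < 1 + r / \<rho> x0\<close> by (subst ln_mult) auto
    finally show ?thesis using C unfolding \<delta>_def by linarith
  qed
qed

lemma critical_radius_exp_log_osc_le:
  fixes \<rho> :: "'a::euclidean_space \<Rightarrow> real" and C \<omega> :: real and n :: nat
  assumes "critical_radius \<rho>" and C: "0 \<le> C" and \<omega>: "0 < \<omega>"
  obtains K \<theta> where "0 < K" "0 \<le> \<theta>" "\<And>x0 r. 0 < r \<Longrightarrow>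
    exp (4 * log_osc C x0 r * \<bar>ln (\<omega> * r ^ n)\<bar>) \<le> K * (1 + r / \<rho> x0) powr \<theta>"
proof -
  obtain c N where c: "1 \<le> c" and "1 \<le> N" and pos: "\<And>x. 0 < \<rho> x"
    and growth: "\<And>x y. \<rho> y \<le> c * \<rho> x * (1 + dist x y / \<rho> x) powr (N / (N + 1))"
    using critical_radiusE[OF assms(1)] by blast
  then have N: "0 \<le> N" by simp
  define D where "D = ln 4 + 2 * C + ln (max 1 (\<rho> 0 / 2)) + (N + 1) * ln (2 * c)"
  define K where "K = exp (4 * \<bar>ln \<omega>\<bar> + 4 * n * D)"
  have "exp (4 * log_osc C x0 r * \<bar>ln (\<omega> * r ^ n)\<bar>) \<le> K * (1 + r / \<rho> x0) powr (4 * n * (N + 1))"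
    if r: "0 < r" for x0 r
  proof -
    define \<delta> where "\<delta> = log_osc C x0 r"
    define L where "L = ln (1 + r / \<rho> x0)"
    have \<delta>: "0 \<le> \<delta>" "\<delta> \<le> 1" using log_osc_nonneg[OF C r] log_osc_le_1 by (auto simp: \<delta>_def)
    have "0 < 1 + r / \<rho> x0" using r pos[of x0] by (simp add: add_pos_pos)
    then have "ln (2 * c * (1 + r / \<rho> x0)) = ln (2 * c) + L"
      using c unfolding L_def by (intro ln_mult_pos) auto
    then have "(N + 1) * ln (2 * c * (1 + r / \<rho> x0)) = (N + 1) * ln (2 * c) + (N + 1) * L"
      by (simp only: distrib_left)
    then have "\<delta> * \<bar>ln r\<bar> \<le> D + (N + 1) * L"
      using log_osc_mult_abs_ln_le[OF c N pos growth C r, of x0] unfolding \<delta>_def D_def by linarith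
    have "\<bar>ln (\<omega> * r ^ n)\<bar> \<le> \<bar>ln \<omega>\<bar> + n * \<bar>ln r\<bar>"
      using \<omega> r abs_triangle_ineq[of "ln \<omega>" "n * ln r"] by (simp add: ln_mult ln_realpow abs_mult)
    then have "4 * \<delta> * \<bar>ln (\<omega> * r ^ n)\<bar> \<le> 4 * \<delta> * (\<bar>ln \<omega>\<bar> + n * \<bar>ln r\<bar>)"
      using \<delta> by (intro mult_left_mono) auto
    also have "\<dots> = 4 * \<delta> * \<bar>ln \<omega>\<bar> + 4 * n * (\<delta> * \<bar>ln r\<bar>)" by (simp add: algebra_simps)
    also have "\<dots> \<le> 4 * \<bar>ln \<omega>\<bar> + 4 * n * (D + (N + 1) * L)"
      using \<delta> \<open>\<delta> * \<bar>ln r\<bar> \<le> D + (N + 1) * L\<close>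
      by (intro add_mono mult_left_mono) (auto simp: mult_left_le_one_le)
    finally have "exp (4 * \<delta> * \<bar>ln (\<omega> * r ^ n)\<bar>)
        \<le> exp (4 * \<bar>ln \<omega>\<bar> + 4 * n * D) * exp (4 * n * (N + 1) * L)"
      by (simp add: exp_add[symmetric] algebra_simps)
    also have "exp (4 * n * (N + 1) * L) = (1 + r / \<rho> x0) powr (4 * n * (N + 1))"
      using \<open>0 < 1 + r / \<rho> x0\<close> by (simp add: L_def powr_def)
    finally show ?thesis by (simp add: \<delta>_def K_def)
  qed
  moreover have "0 < K" "0 \<le> 4 * n * (N + 1)" using N by (simp_all add: K_def)
  ultimately show ?thesis using that by blast
qed

lemma ereal_mult_mult_ereal: "ereal a * x * ereal b = ereal (a * b) * x"
proof -
  have "ereal a * x * ereal b = (ereal a * ereal b) * x" by (simp only: ac_simps)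
  then show ?thesis by simp
qed

lemma Linf_norm_nonneg:
  fixes f :: "'a::euclidean_space \<Rightarrow> real"
  shows "0 \<le> Linf_norm f"
proof -
  have "esssup lebesgue (\<lambda>x::'a. 0 :: ereal) \<le> Linf_norm f"
    unfolding Linf_norm_def by (intro esssup_mono) auto
  moreover have "emeasure lebesgue (UNIV :: 'a set) \<noteq> 0" by simp
  ultimately show ?thesis by (simp add: esssup_const)
qed

lemma weight_indicator_divide_measurable:
  assumes "weight w"
  shows "(\<lambda>y. indicator (ball x0 r) y / w y) \<in> borel_measurable lebesgue"
proof -
  have "set_integrable lebesgue (cball x0 r) w" using assms by (simp add: weight_def)
  then have "(\<lambda>y. indicator (cball x0 r) y *\<^sub>R w y) \<in> borel_measurable lebesgue"
    unfolding set_integrable_def by (rule borel_measurable_integrable)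
  then have "(\<lambda>y. indicator (ball x0 r) y / (indicator (cball x0 r) y *\<^sub>R w y))
      \<in> borel_measurable lebesgue"
    by (intro borel_measurable_divide borel_measurable_indicator fmeasurableD[OF lmeasurable_ball])
  moreover have "(\<lambda>y. indicator (ball x0 r) y / w y)
      = (\<lambda>y. indicator (ball x0 r) y / (indicator (cball x0 r) y *\<^sub>R w y))"
    by (auto simp: indicator_def)
  ultimately show ?thesis by simp
qed

lemma ball_condition_mono_exponent:
  fixes w P Q :: "'a::euclidean_space \<Rightarrow> real" and p q :: "'a \<Rightarrow> ereal" and x0 :: 'a
  assumes w: "weight w" and r: "0 < r"
    and P: "\<And>x. p x = ereal (P x)" and Q: "\<And>x. q x = ereal (Q x)" "Q \<in> borel_measurable lebesgue"
    and QP: "\<And>x. 1 \<le> Q x" "\<And>x. Q x \<le> P x"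
    and osc: "\<And>y. y \<in> ball x0 r \<Longrightarrow> \<bar>1 / P y - 1 / P x0\<bar> \<le> \<delta>"
      "\<And>y. y \<in> ball x0 r \<Longrightarrow> \<bar>1 / Q y - 1 / Q x0\<bar> \<le> \<delta>"
    and nonneg: "0 \<le> C" "0 \<le> T"
    and cond: "Linf_norm (\<lambda>y. w y * indicator (ball x0 r) y)
        * lux_norm (conj_exp q) (\<lambda>y. indicator (ball x0 r) y / w y)
      \<le> ereal C * lux_norm (conj_exp q) (indicator (ball x0 r)) * ereal T"
    and volume: "exp (4 * \<delta> * \<bar>ln (unit_ball_vol DIM('a) * r ^ DIM('a))\<bar>) \<le> K * S"
  shows "Linf_norm (\<lambda>y. w y * indicator (ball x0 r) y)
        * lux_norm (conj_exp p) (\<lambda>y. indicator (ball x0 r) y / w y)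
      \<le> ereal (2 * C * K) * lux_norm (conj_exp p) (indicator (ball x0 r)) * ereal (T * S)"
proof -
  define V where "V = unit_ball_vol DIM('a) * r ^ DIM('a)"
  have P1: "1 \<le> P x" for x using QP[of x] by linarith
  have B: "ball x0 r \<in> sets lebesgue" "emeasure lebesgue (ball x0 r) = ennreal V" "0 < V"
    using emeasure_ball[of r x0] r by (simp_all add: V_def fmeasurableD[OF lmeasurable_ball])
  have G: "0 \<le> 1 - 1 / Q x" "1 - 1 / Q x \<le> 1 - 1 / P x" "1 - 1 / P x \<le> 1" for x
  proof -
    have "1 \<le> Q x" "Q x \<le> P x" using QP by auto
    moreover have "1 / P x \<le> 1 / Q x"
      using calculation by (intro divide_left_mono) (auto simp: mult_pos_pos)
    ultimately show "0 \<le> 1 - 1 / Q x" "1 - 1 / Q x \<le> 1 - 1 / P x" "1 - 1 / P x \<le> 1" by auto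
  qed
  have G_meas: "(\<lambda>x. 1 - 1 / Q x) \<in> borel_measurable lebesgue" using Q(2) by measurable
  have G_osc: "\<And>y. y \<in> ball x0 r \<Longrightarrow> \<bar>(1 - 1 / Q y) - (1 - 1 / Q x0)\<bar> \<le> \<delta>"
    "\<And>y. y \<in> ball x0 r \<Longrightarrow> \<bar>(1 - 1 / P y) - (1 - 1 / P x0)\<bar> \<le> \<delta>"
    using osc by (simp_all add: abs_minus_commute)
  have f: "(\<lambda>y. indicator (ball x0 r) y / w y) \<in> borel_measurable lebesgue"
    "\<And>y. y \<notin> ball x0 r \<Longrightarrow> indicator (ball x0 r) y / w y = 0"
    using weight_indicator_divide_measurable[OF w] by simp_all
  have "Linf_norm (\<lambda>y. w y * indicator (ball x0 r) y)
        * lux_norm (conj_exp p) (\<lambda>y. indicator (ball x0 r) y / w y)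
      \<le> ereal (2 * C) * lux_norm (conj_exp p) (indicator (ball x0 r))
        * ereal (T * exp (4 * \<delta> * \<bar>ln V\<bar>))"
    using lux_recip_condition_mono_exponent[OF B G G_meas G_osc f Linf_norm_nonneg nonneg] cond
    unfolding lux_norm_conj_exp[OF P P1] lux_norm_conj_exp[OF Q(1) QP(1)]
    by blast
  also have "\<dots> \<le> ereal (2 * C) * lux_norm (conj_exp p) (indicator (ball x0 r))
      * ereal (T * (K * S))"
  proof (intro ereal_mult_left_mono)
    show "0 \<le> ereal (2 * C) * lux_norm (conj_exp p) (indicator (ball x0 r))"
      using nonneg lux_recip_nonneg[of "\<lambda>x. 1 - 1 / P x" "indicator (ball x0 r)"]
      unfolding lux_norm_conj_exp[OF P P1] by (simp add: ereal_zero_le_0_iff)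
  qed (use volume nonneg in \<open>simp add: V_def mult_left_mono\<close>)
  also have "\<dots> = ereal (2 * C * K) * lux_norm (conj_exp p) (indicator (ball x0 r)) * ereal (T * S)"
    by (simp only: ereal_mult_mult_ereal) (simp add: ac_simps)
  finally show ?thesis .
qed

theorem proposition9:
  fixes \<rho> :: "'a::euclidean_space \<Rightarrow> real"
    and p q :: "'a \<Rightarrow> ereal"
    and w :: "'a \<Rightarrow> real"
  assumes "critical_radius \<rho>"
    and "log_holder p" and "log_holder q"
    and "\<forall>x. q x \<le> p x"
    and "w \<in> A_rho_infty \<rho> q"
  shows "w \<in> A_rho_infty \<rho> p"
proof -
  obtain P Q C pinf qinf where P: "\<And>x. p x = ereal (P x)" "\<And>x. 1 \<le> P x" "log_holder_bound C pinf P"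
    and Q: "\<And>x. q x = ereal (Q x)" "\<And>x. 1 \<le> Q x" "Q \<in> borel_measurable lebesgue"
      "log_holder_bound C qinf Q"
    using log_holder_common_bound[OF assms(2,3)] by (metis (no_types))
  have QP: "Q x \<le> P x" for x using assms(4) P(1) Q(1) by (metis ereal_less_eq(3))
  have "0 \<le> C" "0 < unit_ball_vol DIM('a)" using log_holder_bound_nonneg[OF P(3)] by simp_all
  then obtain K \<theta>0 where K: "0 < K" "0 \<le> \<theta>0" "\<And>x0 r. 0 < r \<Longrightarrow> exp (4 * log_osc C x0 r
      * \<bar>ln (unit_ball_vol DIM('a) * r ^ DIM('a))\<bar>) \<le> K * (1 + r / \<rho> x0) powr \<theta>0"
    by (rule critical_radius_exp_log_osc_le[OF assms(1), where n = "DIM('a)"]) blast+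
  from assms(5) obtain \<theta> C0 where w: "weight w" and "\<theta> > 0" "C0 > 0"
    and cond: "\<And>x r. r > 0 \<Longrightarrow> Linf_norm (\<lambda>y. w y * indicator (ball x r) y)
        * lux_norm (conj_exp q) (\<lambda>y. indicator (ball x r) y / w y)
      \<le> ereal C0 * lux_norm (conj_exp q) (indicator (ball x r)) * ereal ((1 + r / \<rho> x) powr \<theta>)"
    unfolding A_rho_infty_def by blast
  have "Linf_norm (\<lambda>y. w y * indicator (ball x0 r) y)
        * lux_norm (conj_exp p) (\<lambda>y. indicator (ball x0 r) y / w y)
      \<le> ereal (2 * C0 * K) * lux_norm (conj_exp p) (indicator (ball x0 r))
        * ereal ((1 + r / \<rho> x0) powr (\<theta> + \<theta>0))" if r: "0 < r" for x0 r
    using ball_condition_mono_exponent[OF w r P(1) Q(1,3) Q(2) QP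
        recip_osc_le_log_osc[OF P(3,2)] recip_osc_le_log_osc[OF Q(4,2)] _ _ cond[OF r] K(3)[OF r]]
      \<open>C0 > 0\<close>
    by (simp add: powr_add)
  moreover have "0 < \<theta> + \<theta>0" "0 < 2 * C0 * K" using \<open>\<theta> > 0\<close> \<open>C0 > 0\<close> K(1,2) by simp_all
  ultimately show ?thesis unfolding A_rho_infty_def using w by blast
qed

end
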